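(* Let $n\ge1$ and let $(\xi_i,\mathcal{F}_i)_{i=0,\dots,n}$ be a sequence of real-valued martingale differences on $(\Omega,\mathcal{F},\mathbf{P})$ with $\xi_0=0$, $\{\emptyset,\Omega\}=\mathcal{F}_0\subseteq\cdots\subseteq\mathcal{F}_n\subseteq\mathcal{F}$ and $\mathbf{E}[\xi_i\mid\mathcal{F}_{i-1}]=0$. Let $S_k=\sum_{i=1}^k\xi_i$ and $\langle S\rangle_k=\sum_{i=1}^k\mathbf{E}[\xi_i^2\mid\mathcal{F}_{i-1}]$. Let $p\ge2$ and assume $\mathbf{E}[|\xi_i|^p]<\infty$ for all $i\in[1,n]$. Define $\Xi(S)_k=\sum_{i=1}^k\mathbf{E}[(\xi_i^+)^p\mid\mathcal{F}_{i-1}]$ for $k\in[1,n]$, and set $a=\frac{2}{p+2}$, $b=1-a$. Then for all $x,y,v,w>0$, $$\mathbf{P}\big(S_k\ge x,\ \langle S\rangle_k\le v \text{ and } \Xi(S)_k\le w \text{ for some } k\in[1,n]\big)\le \exp\Big\{-\frac{a^2x^2}{2e^pv}\Big\}+\exp\Big\{-\frac{bx}{y}\log\Big(1+\frac{bxy^{p-1}}{w}\Big)\Big\}+\mathbf{P}\Big(\max_{1\le i\le n}\xi_i>y\Big).$$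
   Context: $x^+=\max\{x,0\}$. (The paper denotes the constants $a,b$ by $\alpha,\beta$.) *)

theory Defs
  imports "HOL-Probability.Probability"
begin

definition mart_sum :: "(nat \<Rightarrow> 'a \<Rightarrow> real) \<Rightarrow> nat \<Rightarrow> 'a \<Rightarrow> real" where
  "mart_sum \<xi> k \<omega> = (\<Sum>i=1..k. \<xi> i \<omega>)"

definition cond_qv :: "'a measure \<Rightarrow> (nat \<Rightarrow> 'a measure) \<Rightarrow> (nat \<Rightarrow> 'a \<Rightarrow> real) \<Rightarrow> nat \<Rightarrow> 'a \<Rightarrow> real" where
  "cond_qv M F \<xi> k \<omega> = (\<Sum>i=1..k. real_cond_exp M (F (i - 1)) (\<lambda>\<eta>. (\<xi> i \<eta>)\<^sup>2) \<omega>)"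

definition cond_pos_moment :: "'a measure \<Rightarrow> (nat \<Rightarrow> 'a measure) \<Rightarrow> real \<Rightarrow> (nat \<Rightarrow> 'a \<Rightarrow> real) \<Rightarrow> nat \<Rightarrow> 'a \<Rightarrow> real" where
  "cond_pos_moment M F p \<xi> k \<omega> = (\<Sum>i=1..k. real_cond_exp M (F (i - 1)) (\<lambda>\<eta>. (max (\<xi> i \<eta>) 0) powr p) \<omega>)"

end

theory Submission
  imports Defs
begin

text \<open>Truncate the increments at \<open>y\<close>. If \<open>exp (\<lambda> t) \<le> 1 + \<lambda> t + \<alpha> t\<^sup>2 + \<beta> (t\<^sup>+)\<^sup>p\<close> for all \<open>t \<le> y\<close>, then
  \<open>Z_k = exp (\<lambda> \<Sum>_{i \<le> k} min \<xi>_i y - \<alpha> \<langle>S\<rangle>_k - \<beta> \<Xi>(S)_k)\<close> is a supermartingale: the martingale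
  property kills the linear term and \<open>1 + c \<le> exp c\<close> absorbs the compensator. Off \<open>{max \<xi>_i > y}\<close>
  the event in question forces \<open>Z_k \<ge> exp (\<lambda> x - \<alpha> v - \<beta> w)\<close> for some \<open>k\<close>, so Ville's maximal
  inequality bounds its probability by \<open>exp (- \<lambda> x + \<alpha> v + \<beta> w)\<close>. The hypothesis on \<open>exp (\<lambda> t)\<close> holds
  with \<open>\<alpha> = \<lambda>\<^sup>2 e\<^sup>p / 2\<close> and \<open>\<beta> = (e\<^sup>\<lambda>\<^sup>y - 1 - \<lambda> y) / y\<^sup>p\<close>, because \<open>(e\<^sup>r - 1 - r) / r\<^sup>p\<close> increases
  for \<open>r \<ge> p\<close>. Finally \<open>\<lambda>\<close> is chosen at the Gaussian point \<open>a x / (e\<^sup>p v)\<close>, which gives the first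
  exponential, or, when that point is too large, at a logarithmic Poisson point, which gives the second.\<close>

lemma exp_remainder_le_square:
  fixes r c :: real
  assumes "r \<le> c" "0 \<le> c"
  shows "exp r - 1 - r \<le> r\<^sup>2 * exp c / 2"
proof -
  obtain t where t: "t \<le> c" "exp r = 1 + r + exp t * r\<^sup>2 / 2"
  proof (cases "r < 0")
    case True
    then obtain t where "r < t" "t < 0" "exp r = (\<Sum>m<2. exp 0 / fact m * r ^ m) + exp t / fact 2 * r ^ 2"
      using Maclaurin_minus[of r 2 "\<lambda>_. exp" exp] by auto
    with assms have "t \<le> c" "exp r = 1 + r + exp t * r\<^sup>2 / 2" by (auto simp: numeral_2_eq_2)
    then show ?thesis by (rule that)
  next
    case False
    then obtain t where "\<bar>t\<bar> \<le> \<bar>r\<bar>" "exp r = (\<Sum>m<2. r ^ m / fact m) + exp t / fact 2 * r ^ 2"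
      using Maclaurin_exp_le[of r 2] by auto
    with False assms have "t \<le> c" "exp r = 1 + r + exp t * r\<^sup>2 / 2" by (auto simp: numeral_2_eq_2)
    then show ?thesis by (rule that)
  qed
  have "exp t * r\<^sup>2 \<le> exp c * r\<^sup>2"
    using t(1) by (intro mult_right_mono) auto
  then show ?thesis using t(2) by (simp add: mult.commute)
qed

lemma exp_remainder_pos: "0 < x \<Longrightarrow> 0 < exp x - 1 - (x::real)"
proof -
  assume "0 < x"
  then have "0 < x\<^sup>2" by simp
  with exp_lower_Taylor_quadratic[of x] \<open>0 < x\<close> show ?thesis by linarith
qed

lemma exp_remainder_nonneg: "0 \<le> exp x - 1 - (x::real)"
  using exp_ge_add_one_self[of x] by linarith

text \<open>On \<open>[c, \<infinity>)\<close> the remainder \<open>exp r - 1 - r\<close> grows at least like \<open>r powr c\<close>: the logarithmic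
  derivative \<open>(exp r - 1) / (exp r - 1 - r)\<close> dominates \<open>c / r\<close> there.\<close>
lemma exp_remainder_powr_ratio_mono:
  fixes r s c :: real
  assumes "c \<le> r" "r \<le> s" "0 < c"
  shows "(exp r - 1 - r) * s powr c \<le> (exp s - 1 - s) * r powr c"
proof -
  define g where "g z = ln (exp z - 1 - z) - c * ln z" for z
  have "g r \<le> g s"
  proof (rule DERIV_nonneg_imp_increasing_open[OF assms(2)])
    fix z assume z: "r < z" "z < s"
    then have "0 < z" "c \<le> z" using assms by auto
    note pos = exp_remainder_pos[OF \<open>0 < z\<close>]
    have "DERIV g z :> (exp z - 1) / (exp z - 1 - z) - c / z"
      unfolding g_def using pos \<open>0 < z\<close> by (auto intro!: derivative_eq_intros simp: field_simps)
    moreover have "c * (exp z - 1 - z) \<le> z * (exp z - 1)"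
    proof -
      have "c * (exp z - 1 - z) \<le> c * (exp z - 1)" using \<open>0 < z\<close> assms(3) by simp
      also have "\<dots> \<le> z * (exp z - 1)" using \<open>0 < z\<close> \<open>c \<le> z\<close> by (intro mult_right_mono) auto
      finally show ?thesis .
    qed
    then have "c / z \<le> (exp z - 1) / (exp z - 1 - z)"
      using pos \<open>0 < z\<close> by (simp add: divide_simps mult.commute)
    ultimately show "\<exists>y. DERIV g z :> y \<and> 0 \<le> y" by auto
  next
    have "isCont g z" if "z \<in> {r..s}" for z
      using that assms exp_remainder_pos[of z] unfolding g_def by (auto intro!: continuous_intros)
    then show "continuous_on {r..s} g" by (simp add: continuous_at_imp_continuous_on)
  qed
  then have "ln (exp r - 1 - r) + c * ln s \<le> ln (exp s - 1 - s) + c * ln r"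
    unfolding g_def by linarith
  then have "exp (ln (exp r - 1 - r) + c * ln s) \<le> exp (ln (exp s - 1 - s) + c * ln r)"
    by simp
  moreover have "r > 0" "s > 0" using assms by auto
  ultimately show ?thesis using exp_remainder_pos[of r] exp_remainder_pos[of s]
    by (simp add: exp_add powr_def mult.commute)
qed

lemma exp_le_quadratic_plus_powr:
  fixes t y l p :: real
  assumes "0 < y" "0 < l" "t \<le> y" "2 \<le> p"
  shows "exp (l * t) \<le> 1 + l * t + (l\<^sup>2 * exp p / 2) * t\<^sup>2
            + ((exp (l * y) - 1 - l * y) / y powr p) * (max t 0) powr p"
proof (cases "l * t \<le> p")
  case True
  have "exp (l * t) - 1 - l * t \<le> (l\<^sup>2 * exp p / 2) * t\<^sup>2"
    using exp_remainder_le_square[OF True] assms by (simp add: power_mult_distrib mult_ac)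
  moreover have "0 \<le> ((exp (l * y) - 1 - l * y) / y powr p) * (max t 0) powr p"
    using exp_remainder_nonneg[of "l * y"] by simp
  ultimately show ?thesis by linarith
next
  case False
  then have "0 < l * t" using assms by linarith
  then have "0 < t" using assms(2) by (simp add: zero_less_mult_iff)
  have "l * t \<le> l * y" using assms by simp
  with False assms have "(exp (l*t) - 1 - l*t) * (l powr p * y powr p) \<le> (exp (l*y) - 1 - l*y) * (l powr p * t powr p)"
    using exp_remainder_powr_ratio_mono[of p "l*t" "l*y"] \<open>0 < t\<close> by (simp add: powr_mult)
  then have "exp (l*t) - 1 - l*t \<le> ((exp (l * y) - 1 - l * y) / y powr p) * t powr p"
    using assms by (simp add: divide_simps mult_ac)
  moreover have "0 \<le> (l\<^sup>2 * exp p / 2) * t\<^sup>2" by simp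
  moreover have "max t 0 = t" using \<open>0 < t\<close> by simp
  ultimately show ?thesis by (simp only:)
qed

lemma pos_part_powr_le_square:
  fixes t y p :: real
  assumes "0 < y" "t \<le> y" "2 \<le> p"
  shows "(max t 0) powr p \<le> y powr (p - 2) * t\<^sup>2"
proof (cases "t > 0")
  case True
  have "t powr p = t powr (p - 2) * t powr 2"
    by (simp add: powr_add[symmetric])
  also have "\<dots> = t powr (p - 2) * t\<^sup>2"
    using True by (simp add: powr_numeral)
  also have "\<dots> \<le> y powr (p - 2) * t\<^sup>2"
    using True assms by (intro mult_right_mono powr_mono2) auto
  finally show ?thesis using True by simp
qed simp

definition tail_exponent :: "real \<Rightarrow> real \<Rightarrow> real \<Rightarrow> real \<Rightarrow> real \<Rightarrow> real" where
  "tail_exponent p X V \<omega> s = - s * X + s\<^sup>2 * V * exp p / 2 + \<omega> * (exp s - 1 - s)"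

lemma tail_exponent_at_gaussian_point:
  fixes p X V \<omega> :: real
  defines "a \<equiv> 2 / (p + 2)"
  defines "s \<equiv> a * X / (exp p * V)"
  assumes "2 \<le> p" "0 < X" "0 < V"
    and small: "\<omega> * (exp s - 1 - s) \<le> (1 - a) * s * X"
  shows "tail_exponent p X V \<omega> s \<le> - (a\<^sup>2 * X\<^sup>2 / (2 * exp p * V))"
proof -
  have "s\<^sup>2 * V * exp p / 2 = s * (a * X) / 2"
    using assms(4,5) unfolding s_def by (simp add: power2_eq_square)
  then have "tail_exponent p X V \<omega> s \<le> - s * X * (a / 2)"
    using small unfolding tail_exponent_def by (simp add: algebra_simps)
  also have "\<dots> = - (a\<^sup>2 * X\<^sup>2 / (2 * exp p * V))"
    unfolding s_def by (simp add: power2_eq_square field_simps)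
  finally show ?thesis .
qed

lemma tail_exponent_at_poisson_point:
  fixes p X V W \<omega> :: real
  defines "a \<equiv> 2 / (p + 2)"
  defines "s \<equiv> ln (1 + (1 - a / 2) * X / \<omega>)"
  assumes "2 \<le> p" "0 < X" "0 < V" "0 < \<omega>" "\<omega> \<le> W"
    and large: "p + 1 \<le> s" and below_gaussian: "s * exp p * V \<le> a * X"
  shows "tail_exponent p X V \<omega> s \<le> - ((1 - a) * X) * ln (1 + (1 - a) * X / W)"
proof -
  have a: "0 < a" "a \<le> 1/2" using assms(3) unfolding a_def by (auto simp: field_simps)
  have exp_s: "\<omega> * (exp s - 1) = (1 - a / 2) * X"
    using a assms(4,6) unfolding s_def by (simp add: add_pos_nonneg)
  have "1 - a / 2 = (p + 1) / (p + 2)" "s * (a / 2) = s / (p + 2)"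
    using assms(3) unfolding a_def by (simp_all add: field_simps)
  moreover have "(p + 1) / (p + 2) \<le> s / (p + 2)"
    using large assms(3) by (intro divide_right_mono) auto
  ultimately have "1 - a / 2 \<le> s * (a / 2)" by linarith
  then have "(1 - a / 2) * X \<le> s * (a / 2) * X"
    using assms(4) by (intro mult_right_mono) auto
  moreover have "s\<^sup>2 * V * exp p / 2 \<le> s * (a * X) / 2"
    using below_gaussian large assms(3) by (simp add: power2_eq_square mult_left_mono mult_ac)
  moreover have "0 \<le> \<omega> * s" using assms(6) large assms(3) by simp
  ultimately have "tail_exponent p X V \<omega> s \<le> - ((1 - a) * X) * s"
    using exp_s unfolding tail_exponent_def by (simp add: algebra_simps)
  also have "\<dots> \<le> - ((1 - a) * X) * ln (1 + (1 - a) * X / W)"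
  proof -
    have "(1 - a) * X / W \<le> (1 - a / 2) * X / \<omega>"
      using a assms(4,6,7) by (intro frac_le mult_right_mono) auto
    moreover have "0 < 1 + (1 - a) * X / W"
      using a assms(4,6,7) by (simp add: add_pos_nonneg)
    ultimately have "ln (1 + (1 - a) * X / W) \<le> s"
      unfolding s_def by simp
    then show ?thesis using a assms(4) by (simp add: mult_left_mono)
  qed
  finally show ?thesis .
qed

text \<open>The Gaussian choice of \<open>s\<close> fails only for large \<open>X/V\<close>, and then the Poisson choice lies far to
  the right of \<open>p\<close>.\<close>
lemma ln_poisson_point_ge:
  fixes p X V \<omega> :: real
  defines "a \<equiv> 2 / (p + 2)"
  assumes "2 \<le> p" "0 < X" "0 < \<omega>" "\<omega> \<le> V" "p < a * X / (exp p * V)"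
  shows "p + 1 \<le> ln (1 + (1 - a / 2) * X / \<omega>)"
proof -
  have "0 < a" "0 < V" using assms(2,4,5) unfolding a_def by auto
  then have "p * exp p / a < X / V"
    using assms(6) by (simp add: field_simps)
  also have "\<dots> \<le> X / \<omega>"
    using assms(3,4,5) by (intro divide_left_mono) auto
  finally have "p * exp p / a \<le> X / \<omega>" by simp
  moreover have "0 \<le> 1 - a / 2" using assms(2) unfolding a_def by simp
  ultimately have "(1 - a / 2) * (p * exp p / a) \<le> (1 - a / 2) * X / \<omega>"
    using mult_left_mono by fastforce
  moreover have "(1 - a / 2) * (p * exp p / a) = p * (p + 1) / 2 * exp p"
    using assms(2) unfolding a_def by (simp add: field_simps)
  moreover have "exp (p + 1) \<le> p * (p + 1) / 2 * exp p"
  proof -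
    have "exp (1::real) \<le> 3" by (rule exp_le)
    also have "3 \<le> p * (p + 1) / 2" using assms(2) mult_mono[of 2 p 3 "p + 1"] by simp
    finally show ?thesis by (simp add: exp_add mult.commute)
  qed
  ultimately have "exp (p + 1) \<le> 1 + (1 - a / 2) * X / \<omega>" by linarith
  then show ?thesis by (metis exp_gt_zero ln_exp ln_le_cancel_iff order_less_le_trans)
qed

lemma gaussian_point_admissible:
  fixes p X V \<omega> :: real
  defines "a \<equiv> 2 / (p + 2)"
  defines "s1 \<equiv> a * X / (exp p * V)" and "s2 \<equiv> ln (1 + (1 - a / 2) * X / \<omega>)"
  assumes "2 \<le> p" "0 < X" "0 < V" "0 < \<omega>" "\<omega> \<le> V" and "s1 \<le> p \<or> s1 < s2"
  shows "\<omega> * (exp s1 - 1 - s1) \<le> (1 - a) * s1 * X"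
proof -
  have a: "0 < a" "a \<le> 1/2" using assms(4) unfolding a_def by (auto simp: field_simps)
  have "0 < s1" using a assms(5,6) unfolding s1_def by simp
  show ?thesis
  proof (cases "s1 \<le> p")
    case True
    have "\<omega> * (exp s1 - 1 - s1) \<le> V * (s1\<^sup>2 * exp p / 2)"
      using exp_remainder_le_square[OF True] exp_remainder_nonneg[of s1] assms(4,7,8)
      by (intro mult_mono) auto
    also have "\<dots> = (a / 2) * s1 * X"
      using assms(6) unfolding s1_def by (simp add: power2_eq_square field_simps)
    also have "\<dots> \<le> (1 - a) * s1 * X" using a \<open>0 < s1\<close> assms(5) by (intro mult_right_mono) auto
    finally show ?thesis .
  next
    case False
    with \<open>s1 \<le> p \<or> s1 < s2\<close> have "exp s1 < exp s2" by simp
    moreover have "\<omega> * (exp s2 - 1) = (1 - a / 2) * X"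
      using a assms(5,7) unfolding s2_def by (simp add: add_pos_nonneg)
    ultimately have "\<omega> * (exp s1 - 1 - s1) \<le> (1 - a / 2) * X"
      using \<open>0 < s1\<close> assms(7) by (smt (verit) mult_left_mono)
    also have "\<dots> \<le> (1 - a) * s1 * X"
    proof -
      have "p + 2 \<le> p * p" using mult_right_mono[of 2 p p] assms(4) by linarith
      then have "1 \<le> (1 - a) * p" using assms(4) unfolding a_def by (simp add: field_simps)
      also have "\<dots> \<le> (1 - a) * s1" using False a by (intro mult_left_mono) auto
      finally have "X \<le> (1 - a) * s1 * X"
        using assms(5) mult_right_mono[of 1 "(1 - a) * s1" X] by simp
      moreover have "(1 - a / 2) * X \<le> X"
        using mult_pos_pos[of a X] a assms(5) by (simp add: algebra_simps)
      ultimately show ?thesis by linarith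
    qed
    finally show ?thesis .
  qed
qed

lemma exists_tail_exponent_le:
  fixes p X V W \<omega> :: real
  defines "a \<equiv> 2 / (p + 2)"
  assumes "2 \<le> p" "0 < X" "0 < V" "0 < \<omega>" "\<omega> \<le> V" "\<omega> \<le> W"
  shows "\<exists>s>0. exp (tail_exponent p X V \<omega> s)
           \<le> exp (- (a\<^sup>2 * X\<^sup>2 / (2 * exp p * V))) + exp (- ((1 - a) * X) * ln (1 + (1 - a) * X / W))"
    (is "\<exists>s>0. _ \<le> exp ?e1 + exp ?e2")
proof -
  define s1 where "s1 = a * X / (exp p * V)"
  define s2 where "s2 = ln (1 + (1 - a / 2) * X / \<omega>)"
  have a: "0 < a" "a \<le> 1/2" using assms(2) unfolding a_def by (auto simp: field_simps)
  have "0 < s1" using a assms(3,4) unfolding s1_def by simp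
  have "\<exists>s>0. tail_exponent p X V \<omega> s \<le> ?e1 \<or> tail_exponent p X V \<omega> s \<le> ?e2"
  proof (cases "s1 \<le> p \<or> s1 < s2")
    case True
    then have "\<omega> * (exp s1 - 1 - s1) \<le> (1 - a) * s1 * X"
      using gaussian_point_admissible[of p X V \<omega>] assms(2-6) unfolding s1_def s2_def a_def by blast
    then show ?thesis
      using tail_exponent_at_gaussian_point[of p X V \<omega>] \<open>0 < s1\<close> assms(2-4)
      unfolding s1_def a_def by blast
  next
    case False
    have "p + 1 \<le> s2"
      using ln_poisson_point_ge[of p X \<omega> V] False assms(2,3,5,6) unfolding s1_def s2_def a_def by simp
    moreover have "s2 * exp p * V \<le> a * X"
      using False assms(4) unfolding s1_def by (simp add: field_simps)
    ultimately show ?thesis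
      using tail_exponent_at_poisson_point[of p X V \<omega> W] assms(2-7) unfolding s2_def a_def
      by (smt (verit))
  qed
  then obtain s where "0 < s" "tail_exponent p X V \<omega> s \<le> ?e1 \<or> tail_exponent p X V \<omega> s \<le> ?e2"
    by blast
  then show ?thesis by (smt (verit) exp_gt_zero exp_le_cancel_iff)
qed

lemma integrable_bounded_mult:
  fixes f g :: "'a \<Rightarrow> real"
  assumes "integrable M f" "g \<in> borel_measurable M" "\<And>x. x \<in> space M \<Longrightarrow> \<bar>g x\<bar> \<le> C"
  shows "integrable M (\<lambda>x. g x * f x)"
proof (rule Bochner_Integration.integrable_bound[where f="\<lambda>x. C * f x"])
  show "AE x in M. norm (g x * f x) \<le> norm (C * f x)"
  proof (rule AE_I2)
    fix x assume x: "x \<in> space M"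
    then have "0 \<le> C" using assms(3)[OF x] by linarith
    then show "norm (g x * f x) \<le> norm (C * f x)"
      using assms(3)[OF x] by (simp add: abs_mult mult_right_mono)
  qed
qed (use assms in auto)

lemma (in sigma_finite_subalgebra) integral_bounded_mult_real_cond_exp:
  fixes f g :: "'a \<Rightarrow> real"
  assumes "integrable M f" "g \<in> borel_measurable F" "\<And>x. x \<in> space M \<Longrightarrow> \<bar>g x\<bar> \<le> C"
  shows "(\<integral>x. g x * real_cond_exp M F f x \<partial>M) = (\<integral>x. g x * f x \<partial>M)"
proof (rule real_cond_exp_intg(2))
  have "g \<in> borel_measurable M" using measurable_from_subalg[OF subalg assms(2)] .
  then show "integrable M (\<lambda>x. g x * f x)" using integrable_bounded_mult assms by blast
qed (use assms in auto)

lemma (in sigma_finite_subalgebra) integral_bounded_mult_nonneg_real_cond_exp: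
  fixes f g :: "'a \<Rightarrow> real"
  assumes "integrable M f" "\<And>x. 0 \<le> f x" "g \<in> borel_measurable F" "\<And>x. x \<in> space M \<Longrightarrow> \<bar>g x\<bar> \<le> C"
  shows "(\<integral>x. g x * max 0 (real_cond_exp M F f x) \<partial>M) = (\<integral>x. g x * f x \<partial>M)"
proof -
  have "AE x in M. 0 \<le> real_cond_exp M F f x"
    using assms(1,2) by (intro real_cond_exp_pos) auto
  then have "(\<integral>x. g x * max 0 (real_cond_exp M F f x) \<partial>M) = (\<integral>x. g x * real_cond_exp M F f x \<partial>M)"
    by (intro integral_cong_AE) (use measurable_from_subalg[OF subalg assms(3)] in auto)
  also have "\<dots> = (\<integral>x. g x * f x \<partial>M)"
    using integral_bounded_mult_real_cond_exp assms(1,3,4) by blast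
  finally show ?thesis .
qed

locale finite_filtration = prob_space M for M :: "'a measure" +
  fixes F :: "nat \<Rightarrow> 'a measure" and n :: nat
  assumes subalgebra_F: "\<And>i. i \<le> n \<Longrightarrow> subalgebra M (F i)"
    and sets_F_Suc: "\<And>i. i < n \<Longrightarrow> sets (F i) \<subseteq> sets (F (Suc i))"
begin

lemma sets_F_mono: "i \<le> j \<Longrightarrow> j \<le> n \<Longrightarrow> sets (F i) \<subseteq> sets (F j)"
proof (induction j rule: dec_induct)
  case (step j)
  then show ?case using sets_F_Suc[of j] by auto
qed simp

lemma measurable_F_mono:
  "f \<in> borel_measurable (F i) \<Longrightarrow> i \<le> j \<Longrightarrow> j \<le> n \<Longrightarrow> f \<in> borel_measurable (F j)"
  by (rule measurable_from_subalg[of _ "F i"])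
     (use sets_F_mono subalgebra_F[of i] subalgebra_F[of j] in \<open>auto simp: subalgebra_def\<close>)

lemma measurable_F_imp_M: "f \<in> borel_measurable (F i) \<Longrightarrow> i \<le> n \<Longrightarrow> f \<in> borel_measurable M"
  using measurable_from_subalg[OF subalgebra_F] by blast

lemma sets_F_imp_M: "A \<in> sets (F i) \<Longrightarrow> i \<le> n \<Longrightarrow> A \<in> sets M"
  using subalgebra_F[of i] by (auto simp: subalgebra_def)

lemma sigma_finite_subalgebra_F: "i \<le> n \<Longrightarrow> sigma_finite_subalgebra M (F i)"
  by (intro finite_measure_subalgebra_is_sigma_finite)
     (simp add: finite_measure_subalgebra_def finite_measure_subalgebra_axioms_def
                subalgebra_F finite_measure_axioms)

end

locale nonneg_supermartingale = finite_filtration +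
  fixes Z :: "nat \<Rightarrow> 'a \<Rightarrow> real"
  assumes adapted: "\<And>k. k \<le> n \<Longrightarrow> Z k \<in> borel_measurable (F k)"
    and integrable_Z: "\<And>k. k \<le> n \<Longrightarrow> integrable M (Z k)"
    and nonneg: "\<And>k \<omega>. 0 \<le> Z k \<omega>"
    and supermartingale: "\<And>k A. k \<in> {1..n} \<Longrightarrow> A \<in> sets (F (k - 1)) \<Longrightarrow>
          (\<integral>\<omega>. indicator A \<omega> * Z k \<omega> \<partial>M) \<le> (\<integral>\<omega>. indicator A \<omega> * Z (k - 1) \<omega> \<partial>M)"
begin

definition stays_below :: "real \<Rightarrow> nat \<Rightarrow> 'a set" where
  "stays_below c j = {\<omega> \<in> space M. \<forall>k\<in>{1..j}. Z k \<omega> < c}"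

lemma stays_below_sets: "j \<le> n \<Longrightarrow> stays_below c j \<in> sets (F j)"
proof -
  assume j: "j \<le> n"
  have "{\<omega> \<in> space (F j). \<forall>k\<in>{1..j}. Z k \<omega> < c} \<in> sets (F j)"
  proof (rule sets.sets_Collect_finite_All)
    fix k assume "k \<in> {1..j}"
    then have [measurable]: "Z k \<in> borel_measurable (F j)"
      using j by (intro measurable_F_mono[OF adapted]) auto
    show "{\<omega> \<in> space (F j). Z k \<omega> < c} \<in> sets (F j)" by measurable
  qed auto
  then show ?thesis using subalgebra_F[OF j] unfolding stays_below_def subalgebra_def by simp
qed

lemma integrable_indicator_Z: "A \<in> sets M \<Longrightarrow> k \<le> n \<Longrightarrow> integrable M (\<lambda>\<omega>. indicator A \<omega> * Z k \<omega>)"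
  using integrable_real_mult_indicator[OF _ integrable_Z] by (simp add: mult.commute)

text \<open>Optional stopping at the first passage above \<open>c\<close>, unrolled one time step at a time.\<close>
lemma maximal_ineq_invariant:
  assumes "0 < c" "j \<le> n"
  shows "c * prob (space M - stays_below c j) + (\<integral>\<omega>. indicator (stays_below c j) \<omega> * Z j \<omega> \<partial>M)
           \<le> (\<integral>\<omega>. Z 0 \<omega> \<partial>M)"
  using assms(2)
proof (induction j)
  case 0
  have "stays_below c 0 = space M" unfolding stays_below_def by auto
  then show ?case by (simp cong: Bochner_Integration.integral_cong)
next
  case (Suc j)
  define D where "D = {\<omega> \<in> stays_below c j. c \<le> Z (Suc j) \<omega>}"
  have sets: "stays_below c j \<in> sets M" "stays_below c (Suc j) \<in> sets M"
    using stays_below_sets sets_F_imp_M Suc.prems by (meson Suc_leD)+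
  have [measurable]: "Z (Suc j) \<in> borel_measurable M"
    using measurable_F_imp_M[OF adapted] Suc.prems by blast
  have D: "D \<in> sets M" unfolding D_def using sets(1) by measurable
  have split: "stays_below c (Suc j) = stays_below c j - D" "D \<subseteq> stays_below c j"
    unfolding stays_below_def D_def by (auto simp: not_le atLeastAtMostSuc_conv)
  have "prob (space M - stays_below c (Suc j)) = prob (space M - stays_below c j) + prob D"
    using split sets D
    by (subst finite_measure_Union[symmetric]) (auto dest: sets.sets_into_space intro!: arg_cong[where f=prob])
  moreover have "c * prob D \<le> (\<integral>\<omega>. indicator D \<omega> * Z (Suc j) \<omega> \<partial>M)"
  proof -
    have "c * prob D = (\<integral>\<omega>. c * indicator D \<omega> \<partial>M)" using D by (simp add: sets.Int_space_eq2)
    also have "\<dots> \<le> (\<integral>\<omega>. indicator D \<omega> * Z (Suc j) \<omega> \<partial>M)"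
    proof (rule integral_mono)
      have "integrable M (indicator D :: 'a \<Rightarrow> real)"
        using D by (intro integrable_real_indicator) (simp_all add: less_top[symmetric])
      then show "integrable M (\<lambda>\<omega>. c * indicator D \<omega>)" by simp
      show "integrable M (\<lambda>\<omega>. indicator D \<omega> * Z (Suc j) \<omega>)"
        using integrable_indicator_Z[OF D Suc.prems] .
    qed (auto simp: D_def indicator_def)
    finally show ?thesis .
  qed
  moreover have "(\<integral>\<omega>. indicator (stays_below c j) \<omega> * Z (Suc j) \<omega> \<partial>M)
      = (\<integral>\<omega>. indicator D \<omega> * Z (Suc j) \<omega> \<partial>M)
        + (\<integral>\<omega>. indicator (stays_below c (Suc j)) \<omega> * Z (Suc j) \<omega> \<partial>M)"
  proof -
    have "(\<integral>\<omega>. indicator (stays_below c j) \<omega> * Z (Suc j) \<omega> \<partial>M)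
        = (\<integral>\<omega>. indicator D \<omega> * Z (Suc j) \<omega> + indicator (stays_below c (Suc j)) \<omega> * Z (Suc j) \<omega> \<partial>M)"
      using split by (intro Bochner_Integration.integral_cong) (auto simp: indicator_def)
    also have "\<dots> = (\<integral>\<omega>. indicator D \<omega> * Z (Suc j) \<omega> \<partial>M)
        + (\<integral>\<omega>. indicator (stays_below c (Suc j)) \<omega> * Z (Suc j) \<omega> \<partial>M)"
      using integrable_indicator_Z[OF D Suc.prems] integrable_indicator_Z[OF sets(2) Suc.prems]
      by (rule Bochner_Integration.integral_add)
    finally show ?thesis .
  qed
  moreover have "(\<integral>\<omega>. indicator (stays_below c j) \<omega> * Z (Suc j) \<omega> \<partial>M)
      \<le> (\<integral>\<omega>. indicator (stays_below c j) \<omega> * Z j \<omega> \<partial>M)"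
    using supermartingale[of "Suc j"] stays_below_sets Suc.prems by simp
  ultimately show ?case using Suc by (simp add: distrib_left)
qed

lemma maximal_ineq:
  assumes "0 < c"
  shows "c * prob {\<omega> \<in> space M. \<exists>k\<in>{1..n}. c \<le> Z k \<omega>} \<le> (\<integral>\<omega>. Z 0 \<omega> \<partial>M)"
proof -
  have "{\<omega> \<in> space M. \<exists>k\<in>{1..n}. c \<le> Z k \<omega>} = space M - stays_below c n"
    unfolding stays_below_def by (auto simp: not_less)
  moreover have "0 \<le> (\<integral>\<omega>. indicator (stays_below c n) \<omega> * Z n \<omega> \<partial>M)"
    using nonneg by (intro Bochner_Integration.integral_nonneg) simp
  ultimately show ?thesis using maximal_ineq_invariant[OF assms order.refl] by simp
qed

end

locale mart_diff_seq = finite_filtration +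
  fixes \<xi> :: "nat \<Rightarrow> 'a \<Rightarrow> real" and p :: real
  assumes adapted_\<xi>: "\<And>i. i \<le> n \<Longrightarrow> \<xi> i \<in> borel_measurable (F i)"
    and integrable_\<xi>: "\<And>i. i \<in> {1..n} \<Longrightarrow> integrable M (\<xi> i)"
    and mart_diff: "\<And>i. i \<in> {1..n} \<Longrightarrow> AE \<omega> in M. real_cond_exp M (F (i - 1)) (\<xi> i) \<omega> = 0"
    and two_le_p: "2 \<le> p"
    and integrable_abs_powr: "\<And>i. i \<in> {1..n} \<Longrightarrow> integrable M (\<lambda>\<omega>. \<bar>\<xi> i \<omega>\<bar> powr p)"
begin

lemma measurable_\<xi>_M [measurable]: "i \<le> n \<Longrightarrow> \<xi> i \<in> borel_measurable M"
  using measurable_F_imp_M[OF adapted_\<xi>] .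

lemma sets_Max_gt: "1 \<le> n \<Longrightarrow> {\<omega> \<in> space M. (MAX i\<in>{1..n}. \<xi> i \<omega>) > y} \<in> events"
proof -
  assume "1 \<le> n"
  then have "{\<omega> \<in> space M. (MAX i\<in>{1..n}. \<xi> i \<omega>) > y} = (\<Union>i\<in>{1..n}. {\<omega> \<in> space M. y < \<xi> i \<omega>})"
    by (auto simp: Max_gr_iff)
  also have "\<dots> \<in> events"
    using measurable_\<xi>_M by (intro sets.finite_UN) auto
  finally show ?thesis .
qed

lemma integrable_\<xi>_square: "i \<in> {1..n} \<Longrightarrow> integrable M (\<lambda>\<omega>. (\<xi> i \<omega>)\<^sup>2)"
proof (rule Bochner_Integration.integrable_bound[where f="\<lambda>\<omega>. 1 + \<bar>\<xi> i \<omega>\<bar> powr p"])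
  assume i: "i \<in> {1..n}"
  then show "integrable M (\<lambda>\<omega>. 1 + \<bar>\<xi> i \<omega>\<bar> powr p)" using integrable_abs_powr by simp
  show "AE \<omega> in M. norm ((\<xi> i \<omega>)\<^sup>2) \<le> norm (1 + \<bar>\<xi> i \<omega>\<bar> powr p)"
  proof (rule AE_I2)
    fix \<omega>
    have "(\<xi> i \<omega>)\<^sup>2 \<le> 1 + \<bar>\<xi> i \<omega>\<bar> powr p"
    proof (cases "\<bar>\<xi> i \<omega>\<bar> \<le> 1")
      case True
      then have "(\<xi> i \<omega>)\<^sup>2 \<le> 1" by (simp add: abs_square_le_1)
      then show ?thesis using powr_ge_zero[of "\<bar>\<xi> i \<omega>\<bar>" p] by linarith
    next
      case False
      then have "\<bar>\<xi> i \<omega>\<bar> powr 2 \<le> \<bar>\<xi> i \<omega>\<bar> powr p" using two_le_p by (intro powr_mono) auto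
      then show ?thesis using False by (simp add: powr_numeral)
    qed
    then show "norm ((\<xi> i \<omega>)\<^sup>2) \<le> norm (1 + \<bar>\<xi> i \<omega>\<bar> powr p)" by simp
  qed
qed (use measurable_\<xi>_M in auto)

lemma integrable_\<xi>_pos_powr: "i \<in> {1..n} \<Longrightarrow> integrable M (\<lambda>\<omega>. (max (\<xi> i \<omega>) 0) powr p)"
  by (rule Bochner_Integration.integrable_bound[where f="\<lambda>\<omega>. \<bar>\<xi> i \<omega>\<bar> powr p"])
     (use integrable_abs_powr measurable_\<xi>_M two_le_p in \<open>auto intro!: powr_mono2\<close>)

lemma integrable_\<xi>_min: "i \<in> {1..n} \<Longrightarrow> integrable M (\<lambda>\<omega>. min (\<xi> i \<omega>) y)"
  by (rule Bochner_Integration.integrable_bound[where f="\<lambda>\<omega>. \<bar>\<xi> i \<omega>\<bar> + \<bar>y\<bar>"])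
     (use integrable_\<xi> measurable_\<xi>_M in auto)

text \<open>Truncating an increment from above can only lower its conditional mean, which is zero.\<close>
lemma integral_weighted_truncation_nonpos:
  assumes "Suc m \<le> n" "g \<in> borel_measurable (F m)" "\<And>\<omega>. 0 \<le> g \<omega>" "\<And>\<omega>. \<bar>g \<omega>\<bar> \<le> C"
  shows "(\<integral>\<omega>. g \<omega> * min (\<xi> (Suc m) \<omega>) y \<partial>M) \<le> 0"
proof -
  interpret S: sigma_finite_subalgebra M "F m" using sigma_finite_subalgebra_F assms(1) by simp
  have i: "Suc m \<in> {1..n}" using assms(1) by simp
  have g_M [measurable]: "g \<in> borel_measurable M" using measurable_from_subalg[OF S.subalg assms(2)] .
  have "(\<integral>\<omega>. g \<omega> * min (\<xi> (Suc m) \<omega>) y \<partial>M) \<le> (\<integral>\<omega>. g \<omega> * \<xi> (Suc m) \<omega> \<partial>M)"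
    using integrable_bounded_mult[OF integrable_\<xi>_min[OF i] g_M assms(4)]
      integrable_bounded_mult[OF integrable_\<xi>[OF i] g_M assms(4)] assms(3)
    by (intro integral_mono) (auto intro: mult_left_mono)
  also have "\<dots> = (\<integral>\<omega>. g \<omega> * real_cond_exp M (F m) (\<xi> (Suc m)) \<omega> \<partial>M)"
    using S.integral_bounded_mult_real_cond_exp[OF integrable_\<xi>[OF i] assms(2,4)] by simp
  also have "\<dots> = (\<integral>\<omega>. g \<omega> * 0 \<partial>M)"
    using mart_diff[OF i] by (intro integral_cong_AE) auto
  finally show ?thesis by simp
qed

lemma AE_cond_moments_nonneg:
  "AE \<omega> in M. \<forall>i\<in>{1..n}. 0 \<le> real_cond_exp M (F (i - 1)) (\<lambda>\<eta>. (\<xi> i \<eta>)\<^sup>2) \<omega>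
                        \<and> 0 \<le> real_cond_exp M (F (i - 1)) (\<lambda>\<eta>. (max (\<xi> i \<eta>) 0) powr p) \<omega>"
proof (rule AE_finite_allI)
  fix i assume i: "i \<in> {1..n}"
  interpret sigma_finite_subalgebra M "F (i - 1)" using i by (intro sigma_finite_subalgebra_F) auto
  show "AE \<omega> in M. 0 \<le> real_cond_exp M (F (i - 1)) (\<lambda>\<eta>. (\<xi> i \<eta>)\<^sup>2) \<omega>
                   \<and> 0 \<le> real_cond_exp M (F (i - 1)) (\<lambda>\<eta>. (max (\<xi> i \<eta>) 0) powr p) \<omega>"
    using i by (intro AE_conjI real_cond_exp_pos) auto
qed simp

end

locale mart_diff_exp_bound = mart_diff_seq +
  fixes y l \<alpha> \<beta> :: real
  assumes pos_y: "0 < y" and pos_l: "0 < l" and nonneg_\<alpha>: "0 \<le> \<alpha>" and nonneg_\<beta>: "0 \<le> \<beta>"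
    and exp_bound: "\<And>t. t \<le> y \<Longrightarrow> exp (l * t) \<le> 1 + l * t + \<alpha> * t\<^sup>2 + \<beta> * (max t 0) powr p"
begin

text \<open>The conditional moments are cut off below at \<open>0\<close>; this changes them only on a null set but
  makes the exponential supermartingale \<open>Z\<close> bounded.\<close>
definition compensator :: "nat \<Rightarrow> 'a \<Rightarrow> real" where
  "compensator i \<omega> = \<alpha> * max 0 (real_cond_exp M (F (i - 1)) (\<lambda>\<eta>. (\<xi> i \<eta>)\<^sup>2) \<omega>)
     + \<beta> * max 0 (real_cond_exp M (F (i - 1)) (\<lambda>\<eta>. (max (\<xi> i \<eta>) 0) powr p) \<omega>)"

definition Z :: "nat \<Rightarrow> 'a \<Rightarrow> real" where
  "Z k \<omega> = exp (l * (\<Sum>i=1..k. min (\<xi> i \<omega>) y) - (\<Sum>i=1..k. compensator i \<omega>))"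

lemma compensator_nonneg: "0 \<le> compensator i \<omega>"
  unfolding compensator_def using nonneg_\<alpha> nonneg_\<beta> by simp

lemma compensator_measurable [measurable]: "compensator i \<in> borel_measurable (F (i - 1))"
  unfolding compensator_def by measurable

lemma Z_measurable: "k \<le> n \<Longrightarrow> Z k \<in> borel_measurable (F k)"
proof -
  assume k: "k \<le> n"
  have "\<xi> i \<in> borel_measurable (F k)" "compensator i \<in> borel_measurable (F k)" if "i \<in> {1..k}" for i
    using that k by (auto intro!: measurable_F_mono[OF adapted_\<xi>] measurable_F_mono[OF compensator_measurable])
  then have "(\<lambda>\<omega>. \<Sum>i=1..k. min (\<xi> i \<omega>) y) \<in> borel_measurable (F k)"
    "(\<lambda>\<omega>. \<Sum>i=1..k. compensator i \<omega>) \<in> borel_measurable (F k)"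
    by (auto intro!: borel_measurable_sum borel_measurable_min)
  then show ?thesis unfolding Z_def by measurable
qed

lemma Z_pos: "0 < Z k \<omega>"
  unfolding Z_def by simp

lemma Z_le: "Z k \<omega> \<le> exp (l * (real k * y))"
proof -
  have "(\<Sum>i=1..k. min (\<xi> i \<omega>) y) \<le> real k * y"
    using sum_mono[of "{1..k}" "\<lambda>i. min (\<xi> i \<omega>) y" "\<lambda>_. y"] by simp
  then have "l * (\<Sum>i=1..k. min (\<xi> i \<omega>) y) \<le> l * (real k * y)"
    using pos_l by (simp add: mult_left_mono)
  moreover have "0 \<le> (\<Sum>i=1..k. compensator i \<omega>)" by (simp add: compensator_nonneg sum_nonneg)
  ultimately show ?thesis unfolding Z_def by simp
qed

lemma Z_integrable: "k \<le> n \<Longrightarrow> integrable M (Z k)"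
  by (rule integrable_const_bound[where B="exp (l * (real k * y))"])
     (use Z_le Z_pos measurable_F_imp_M[OF Z_measurable] in \<open>auto simp: less_imp_le\<close>)

lemma Z_Suc: "Z (Suc k) \<omega> = Z k \<omega> * exp (- compensator (Suc k) \<omega>) * exp (l * min (\<xi> (Suc k) \<omega>) y)"
  unfolding Z_def by (simp add: exp_add[symmetric] exp_diff algebra_simps)

lemma Z_Suc_le:
  "Z (Suc k) \<omega> \<le> Z k \<omega> * exp (- compensator (Suc k) \<omega>)
     * (1 + l * min (\<xi> (Suc k) \<omega>) y + \<alpha> * (\<xi> (Suc k) \<omega>)\<^sup>2 + \<beta> * (max (\<xi> (Suc k) \<omega>) 0) powr p)"
proof -
  let ?t = "\<xi> (Suc k) \<omega>"
  have "(min ?t y)\<^sup>2 \<le> ?t\<^sup>2"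
    using pos_y by (cases "?t \<le> y") (auto intro: power_mono)
  moreover have "(max (min ?t y) 0) powr p \<le> (max ?t 0) powr p"
    using two_le_p by (intro powr_mono2) auto
  ultimately have "exp (l * min ?t y) \<le> 1 + l * min ?t y + \<alpha> * ?t\<^sup>2 + \<beta> * (max ?t 0) powr p"
    using exp_bound[of "min ?t y"] nonneg_\<alpha> nonneg_\<beta>
    by (smt (verit, best) min.cobounded2 mult_left_mono)
  then show ?thesis
    unfolding Z_Suc using Z_pos[of k \<omega>] by (intro mult_left_mono) auto
qed

lemma Z_compensated_le:
  "Z k \<omega> * exp (- compensator (Suc k) \<omega>) * (1 + compensator (Suc k) \<omega>) \<le> Z k \<omega>"
proof -
  have "exp (- compensator (Suc k) \<omega>) * (1 + compensator (Suc k) \<omega>) \<le> 1"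
    using exp_ge_add_one_self[of "compensator (Suc k) \<omega>"] by (simp add: exp_minus field_simps)
  then show ?thesis using Z_pos[of k \<omega>] by (simp add: mult_left_le mult.assoc)
qed

lemma integral_weighted_compensator:
  assumes "Suc m \<le> n" "g \<in> borel_measurable (F m)" "\<And>\<omega>. \<bar>g \<omega>\<bar> \<le> C"
  shows "integrable M (\<lambda>\<omega>. g \<omega> * (1 + compensator (Suc m) \<omega>))"
    and "(\<integral>\<omega>. g \<omega> * (1 + compensator (Suc m) \<omega>) \<partial>M) = (\<integral>\<omega>. g \<omega> \<partial>M)
           + \<alpha> * (\<integral>\<omega>. g \<omega> * (\<xi> (Suc m) \<omega>)\<^sup>2 \<partial>M) + \<beta> * (\<integral>\<omega>. g \<omega> * (max (\<xi> (Suc m) \<omega>) 0) powr p \<partial>M)"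
proof -
  interpret S: sigma_finite_subalgebra M "F m" using sigma_finite_subalgebra_F assms(1) by simp
  have i: "Suc m \<in> {1..n}" using assms(1) by simp
  have int_g: "integrable M (\<lambda>\<omega>. g \<omega> * f \<omega>)" if "integrable M f" for f
    using integrable_bounded_mult[OF that measurable_from_subalg[OF S.subalg assms(2)] assms(3)] .
  let ?sq = "\<lambda>\<omega>. max 0 (real_cond_exp M (F m) (\<lambda>\<eta>. (\<xi> (Suc m) \<eta>)\<^sup>2) \<omega>)"
  let ?pos = "\<lambda>\<omega>. max 0 (real_cond_exp M (F m) (\<lambda>\<eta>. (max (\<xi> (Suc m) \<eta>) 0) powr p) \<omega>)"
  have int_cond: "integrable M ?sq" "integrable M ?pos"
    using S.real_cond_exp_int(1)[OF integrable_\<xi>_square[OF i]]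
      S.real_cond_exp_int(1)[OF integrable_\<xi>_pos_powr[OF i]] by (auto intro: integrable_max)
  have "integrable M (\<lambda>\<omega>. 1 + compensator (Suc m) \<omega>)"
    using int_cond unfolding compensator_def by simp
  then show "integrable M (\<lambda>\<omega>. g \<omega> * (1 + compensator (Suc m) \<omega>))" by (rule int_g)
  have "(\<integral>\<omega>. g \<omega> * (1 + compensator (Suc m) \<omega>) \<partial>M)
      = (\<integral>\<omega>. g \<omega> + \<alpha> * (g \<omega> * ?sq \<omega>) + \<beta> * (g \<omega> * ?pos \<omega>) \<partial>M)"
    unfolding compensator_def by (simp add: algebra_simps)
  also have "\<dots> = (\<integral>\<omega>. g \<omega> \<partial>M) + \<alpha> * (\<integral>\<omega>. g \<omega> * ?sq \<omega> \<partial>M) + \<beta> * (\<integral>\<omega>. g \<omega> * ?pos \<omega> \<partial>M)"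
    using int_g[OF integrable_const[of 1]] int_g[OF int_cond(1)] int_g[OF int_cond(2)] by simp
  finally show "(\<integral>\<omega>. g \<omega> * (1 + compensator (Suc m) \<omega>) \<partial>M) = (\<integral>\<omega>. g \<omega> \<partial>M)
      + \<alpha> * (\<integral>\<omega>. g \<omega> * (\<xi> (Suc m) \<omega>)\<^sup>2 \<partial>M) + \<beta> * (\<integral>\<omega>. g \<omega> * (max (\<xi> (Suc m) \<omega>) 0) powr p \<partial>M)"
    using S.integral_bounded_mult_nonneg_real_cond_exp[OF integrable_\<xi>_square[OF i] _ assms(2,3)]
      S.integral_bounded_mult_nonneg_real_cond_exp[OF integrable_\<xi>_pos_powr[OF i] _ assms(2,3)]
    by simp
qed

lemma supermartingale_step:
  assumes "Suc m \<le> n" "A \<in> sets (F m)"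
  shows "(\<integral>\<omega>. indicator A \<omega> * Z (Suc m) \<omega> \<partial>M) \<le> (\<integral>\<omega>. indicator A \<omega> * Z m \<omega> \<partial>M)"
proof -
  define g where "g \<omega> = indicator A \<omega> * Z m \<omega> * exp (- compensator (Suc m) \<omega>)" for \<omega>
  define C where "C = exp (l * (real m * y))"
  have [measurable]: "Z m \<in> borel_measurable (F m)" "A \<in> sets (F m)"
    using Z_measurable assms by auto
  have g_F: "g \<in> borel_measurable (F m)"
    unfolding g_def using compensator_measurable[of "Suc m"] by simp
  have g_nonneg: "0 \<le> g \<omega>" for \<omega>
    unfolding g_def using Z_pos[of m \<omega>] by simp
  have g_le: "\<bar>g \<omega>\<bar> \<le> C" for \<omega>
    using Z_le[of m \<omega>] Z_pos[of m \<omega>] compensator_nonneg[of "Suc m" \<omega>] g_nonneg[of \<omega>]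
    unfolding g_def C_def by (auto simp: indicator_def intro: order.trans[OF mult_left_le])
  have i: "Suc m \<in> {1..n}" using assms by simp
  have int_g: "integrable M (\<lambda>\<omega>. g \<omega> * f \<omega>)" if "integrable M f" for f
    using integrable_bounded_mult[OF that measurable_F_imp_M[OF g_F] g_le] assms(1) by simp
  note ints = int_g[OF integrable_const[of 1]] int_g[OF integrable_\<xi>_min[OF i]]
    int_g[OF integrable_\<xi>_square[OF i]] int_g[OF integrable_\<xi>_pos_powr[OF i]]
  have "(\<integral>\<omega>. indicator A \<omega> * Z (Suc m) \<omega> \<partial>M)
      \<le> (\<integral>\<omega>. g \<omega> + l * (g \<omega> * min (\<xi> (Suc m) \<omega>) y) + \<alpha> * (g \<omega> * (\<xi> (Suc m) \<omega>)\<^sup>2)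
              + \<beta> * (g \<omega> * (max (\<xi> (Suc m) \<omega>) 0) powr p) \<partial>M)"
    using integrable_real_mult_indicator[OF sets_F_imp_M Z_integrable, of A m "Suc m"] assms ints
      Z_Suc_le[of m] unfolding g_def
    by (intro integral_mono) (auto simp: indicator_def algebra_simps)
  also have "\<dots> = (\<integral>\<omega>. g \<omega> \<partial>M) + l * (\<integral>\<omega>. g \<omega> * min (\<xi> (Suc m) \<omega>) y \<partial>M)
      + \<alpha> * (\<integral>\<omega>. g \<omega> * (\<xi> (Suc m) \<omega>)\<^sup>2 \<partial>M) + \<beta> * (\<integral>\<omega>. g \<omega> * (max (\<xi> (Suc m) \<omega>) 0) powr p \<partial>M)"
    using ints by simp
  also have "\<dots> \<le> (\<integral>\<omega>. g \<omega> * (1 + compensator (Suc m) \<omega>) \<partial>M)"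
    using integral_weighted_compensator(2)[OF assms(1) g_F g_le] pos_l
      integral_weighted_truncation_nonpos[OF assms(1) g_F g_nonneg g_le, of y]
    by (simp add: mult_nonneg_nonpos)
  also have "\<dots> \<le> (\<integral>\<omega>. indicator A \<omega> * Z m \<omega> \<partial>M)"
  proof (rule integral_mono)
    show "integrable M (\<lambda>\<omega>. g \<omega> * (1 + compensator (Suc m) \<omega>))"
      using integral_weighted_compensator(1)[OF assms(1) g_F g_le] .
    show "integrable M (\<lambda>\<omega>. indicator A \<omega> * Z m \<omega>)"
      using integrable_real_mult_indicator[OF sets_F_imp_M Z_integrable, of A m m] assms
      by (simp add: mult.commute)
    show "g \<omega> * (1 + compensator (Suc m) \<omega>) \<le> indicator A \<omega> * Z m \<omega>" for \<omega>
      using Z_compensated_le[of m \<omega>] unfolding g_def by (simp add: indicator_def)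
  qed
  finally show ?thesis .
qed

sublocale Z: nonneg_supermartingale M F n Z
proof
  fix k A assume "k \<in> {1..n}" "A \<in> sets (F (k - 1))"
  then obtain m where "k = Suc m" "Suc m \<le> n" "A \<in> sets (F m)" by (cases k) auto
  then show "(\<integral>\<omega>. indicator A \<omega> * Z k \<omega> \<partial>M) \<le> (\<integral>\<omega>. indicator A \<omega> * Z (k - 1) \<omega> \<partial>M)"
    using supermartingale_step by simp
qed (use Z_measurable Z_integrable in \<open>auto intro: less_imp_le[OF Z_pos]\<close>)

lemma Z_ge_on_event:
  assumes below: "\<forall>i\<in>{1..n}. \<xi> i \<omega> \<le> y"
    and nonneg: "\<forall>i\<in>{1..n}. 0 \<le> real_cond_exp M (F (i - 1)) (\<lambda>\<eta>. (\<xi> i \<eta>)\<^sup>2) \<omega>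
                        \<and> 0 \<le> real_cond_exp M (F (i - 1)) (\<lambda>\<eta>. (max (\<xi> i \<eta>) 0) powr p) \<omega>"
    and k: "k \<in> {1..n}" and "x \<le> mart_sum \<xi> k \<omega>" "cond_qv M F \<xi> k \<omega> \<le> v" "cond_pos_moment M F p \<xi> k \<omega> \<le> w"
  shows "exp (l * x - \<alpha> * v - \<beta> * w) \<le> Z k \<omega>"
proof -
  have sum_min: "(\<Sum>i=1..k. min (\<xi> i \<omega>) y) = mart_sum \<xi> k \<omega>"
    unfolding mart_sum_def using below k by (intro sum.cong) auto
  have "compensator i \<omega> = \<alpha> * real_cond_exp M (F (i - 1)) (\<lambda>\<eta>. (\<xi> i \<eta>)\<^sup>2) \<omega>
      + \<beta> * real_cond_exp M (F (i - 1)) (\<lambda>\<eta>. (max (\<xi> i \<eta>) 0) powr p) \<omega>" if "i \<in> {1..k}" for i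
    using nonneg that k unfolding compensator_def by (simp add: max_absorb2)
  then have sum_compensator:
    "(\<Sum>i=1..k. compensator i \<omega>) = \<alpha> * cond_qv M F \<xi> k \<omega> + \<beta> * cond_pos_moment M F p \<xi> k \<omega>"
    unfolding cond_qv_def cond_pos_moment_def by (simp add: sum.distrib sum_distrib_left)
  have "l * x \<le> l * mart_sum \<xi> k \<omega>" "\<alpha> * cond_qv M F \<xi> k \<omega> \<le> \<alpha> * v"
    "\<beta> * cond_pos_moment M F p \<xi> k \<omega> \<le> \<beta> * w"
    using assms(4-6) pos_l nonneg_\<alpha> nonneg_\<beta> by (simp_all add: mult_left_mono)
  then show ?thesis
    unfolding Z_def sum_min sum_compensator exp_le_cancel_iff by linarith
qed

lemma tail_bound:
  assumes "1 \<le> n"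
  shows "measure M {\<omega> \<in> space M. \<exists>k\<in>{1..n}. mart_sum \<xi> k \<omega> \<ge> x
              \<and> cond_qv M F \<xi> k \<omega> \<le> v \<and> cond_pos_moment M F p \<xi> k \<omega> \<le> w}
         \<le> exp (- l * x + \<alpha> * v + \<beta> * w) + measure M {\<omega> \<in> space M. (MAX i\<in>{1..n}. \<xi> i \<omega>) > y}"
    (is "measure M ?E \<le> _ + measure M ?G")
proof -
  define c where "c = exp (l * x - \<alpha> * v - \<beta> * w)"
  let ?U = "{\<omega> \<in> space M. \<exists>k\<in>{1..n}. c \<le> Z k \<omega>}"
  have G: "?G \<in> events" using sets_Max_gt[OF assms] .
  have "?U = space M - Z.stays_below c n"
    unfolding Z.stays_below_def by (auto simp: not_less)
  then have U: "?U \<in> events" using Z.stays_below_sets sets_F_imp_M by auto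
  have "AE \<omega> in M. \<omega> \<in> ?E \<longrightarrow> \<omega> \<in> ?U \<union> ?G"
    using AE_cond_moments_nonneg
  proof eventually_elim
    case (elim \<omega>)
    show ?case
    proof (intro impI)
      assume "\<omega> \<in> ?E"
      then obtain k where "\<omega> \<in> space M" "k \<in> {1..n}" "mart_sum \<xi> k \<omega> \<ge> x"
        "cond_qv M F \<xi> k \<omega> \<le> v" "cond_pos_moment M F p \<xi> k \<omega> \<le> w" by blast
      moreover have "\<forall>i\<in>{1..n}. \<xi> i \<omega> \<le> y" if "\<omega> \<notin> ?G"
        using that \<open>\<omega> \<in> space M\<close> by (auto simp: not_less)
      ultimately show "\<omega> \<in> ?U \<union> ?G"
        using Z_ge_on_event[OF _ elim] unfolding c_def by blast
    qed
  qed
  then have "measure M ?E \<le> measure M (?U \<union> ?G)"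
    using U G by (intro finite_measure_mono_AE) auto
  also have "\<dots> \<le> measure M ?U + measure M ?G"
    using U G by (rule measure_Un_le)
  also have "measure M ?U \<le> exp (- l * x + \<alpha> * v + \<beta> * w)"
  proof -
    have "(\<integral>\<omega>. Z 0 \<omega> \<partial>M) = 1" by (simp add: Z_def prob_space)
    then have "c * measure M ?U \<le> 1"
      using Z.maximal_ineq[of c] unfolding c_def by simp
    moreover have "c * exp (- l * x + \<alpha> * v + \<beta> * w) = 1"
      unfolding c_def by (simp add: exp_add[symmetric])
    ultimately show ?thesis using mult_le_cancel_left_pos[of c] unfolding c_def by fastforce
  qed
  finally show ?thesis by simp
qed

end

context mart_diff_seq
begin

text \<open>Two exponential supermartingales are available: one controls \<open>(t\<^sup>+)\<^sup>p\<close> through \<open>\<Xi>(S)\<close>,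
  the other through \<open>y\<^bsup>p-2\<^esup> t\<^sup>2\<close> and \<open>\<langle>S\<rangle>\<close>; the better of the two gives the factor \<open>min W V\<close>.\<close>
lemma tail_bound_tail_exponent:
  fixes x y v w s :: real
  assumes "1 \<le> n" "0 < y" "0 < s"
  defines "V \<equiv> v / y\<^sup>2" and "W \<equiv> w / y powr p"
  shows "measure M {\<omega> \<in> space M. \<exists>k\<in>{1..n}. mart_sum \<xi> k \<omega> \<ge> x
              \<and> cond_qv M F \<xi> k \<omega> \<le> v \<and> cond_pos_moment M F p \<xi> k \<omega> \<le> w}
         \<le> exp (tail_exponent p (x / y) V (min W V) s)
           + measure M {\<omega> \<in> space M. (MAX i\<in>{1..n}. \<xi> i \<omega>) > y}"
proof -
  define l where "l = s / y"
  define \<alpha> where "\<alpha> = l\<^sup>2 * exp p / 2"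
  define \<beta> where "\<beta> = (exp s - 1 - s) / y powr p"
  have l: "0 < l" "l * y = s" using assms(2,3) unfolding l_def by auto
  have \<beta>: "0 \<le> \<beta>" unfolding \<beta>_def using exp_remainder_nonneg[of s] by simp
  have bound1: "exp (l * t) \<le> 1 + l * t + \<alpha> * t\<^sup>2 + \<beta> * (max t 0) powr p" if "t \<le> y" for t
    using exp_le_quadratic_plus_powr[OF assms(2) l(1) that two_le_p] l(2) unfolding \<alpha>_def \<beta>_def by simp
  have bound2: "exp (l * t) \<le> 1 + l * t + (\<alpha> + \<beta> * y powr (p - 2)) * t\<^sup>2 + 0 * (max t 0) powr p"
    if "t \<le> y" for t
    using bound1[OF that] mult_left_mono[OF pos_part_powr_le_square[OF assms(2) that two_le_p] \<beta>]
    by (simp add: algebra_simps)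
  have instance1: "mart_diff_exp_bound M F n \<xi> p y l \<alpha> \<beta>"
    by (intro mart_diff_exp_bound.intro mart_diff_seq_axioms mart_diff_exp_bound_axioms.intro)
       (use bound1 assms(2) l(1) \<beta> in \<open>auto simp: \<alpha>_def\<close>)
  have instance2: "mart_diff_exp_bound M F n \<xi> p y l (\<alpha> + \<beta> * y powr (p - 2)) 0"
    by (intro mart_diff_exp_bound.intro mart_diff_seq_axioms mart_diff_exp_bound_axioms.intro)
       (use bound2 assms(2) l(1) \<beta> in \<open>auto simp: \<alpha>_def\<close>)
  note tail_bounds = instance1[THEN mart_diff_exp_bound.tail_bound, OF assms(1), of x v w]
    instance2[THEN mart_diff_exp_bound.tail_bound, OF assms(1), of x v w]
  have common: "- l * x + \<alpha> * v = - s * (x / y) + s\<^sup>2 * V * exp p / 2"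
    unfolding l_def \<alpha>_def V_def by (simp add: power_divide)
  have "\<beta> * w = W * (exp s - 1 - s)" "\<beta> * y powr (p - 2) * v = V * (exp s - 1 - s)"
    using assms(2) unfolding \<beta>_def W_def V_def by (simp_all add: powr_diff powr_numeral)
  note remainders = this
  show ?thesis
  proof (cases "W \<le> V")
    case True
    then have "tail_exponent p (x / y) V (min W V) s = - l * x + \<alpha> * v + \<beta> * w"
      using common remainders(1) unfolding tail_exponent_def by (simp add: min_absorb1)
    then show ?thesis using tail_bounds(1) by simp
  next
    case False
    have "(\<alpha> + \<beta> * y powr (p - 2)) * v = \<alpha> * v + \<beta> * y powr (p - 2) * v"
      by (simp add: algebra_simps)
    with False have "tail_exponent p (x / y) V (min W V) s = - l * x + (\<alpha> + \<beta> * y powr (p - 2)) * v + 0 * w"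
      using common remainders(2) unfolding tail_exponent_def by (simp add: min_absorb2)
    then show ?thesis using tail_bounds(2) by simp
  qed
qed

lemma tail_bound_optimized:
  assumes "1 \<le> n" "0 < x" "0 < y" "0 < v" "0 < w"
  shows "measure M {\<omega> \<in> space M. \<exists>k\<in>{1..n}. mart_sum \<xi> k \<omega> \<ge> x
              \<and> cond_qv M F \<xi> k \<omega> \<le> v \<and> cond_pos_moment M F p \<xi> k \<omega> \<le> w}
         \<le> exp (- ((2 / (p + 2))\<^sup>2 * x\<^sup>2 / (2 * exp p * v)))
           + exp (- ((1 - 2 / (p + 2)) * x / y) * ln (1 + (1 - 2 / (p + 2)) * x * y powr (p - 1) / w))
           + measure M {\<omega> \<in> space M. (MAX i\<in>{1..n}. \<xi> i \<omega>) > y}"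
proof -
  define V where "V = v / y\<^sup>2"
  define W where "W = w / y powr p"
  have "0 < x / y" "0 < V" "0 < W" using assms unfolding V_def W_def by auto
  then obtain s where "0 < s" and s: "exp (tail_exponent p (x / y) V (min W V) s)
      \<le> exp (- ((2 / (p + 2))\<^sup>2 * (x / y)\<^sup>2 / (2 * exp p * V)))
        + exp (- ((1 - 2 / (p + 2)) * (x / y)) * ln (1 + (1 - 2 / (p + 2)) * (x / y) / W))"
    using exists_tail_exponent_le[OF two_le_p, of "x / y" V "min W V" W] by (auto simp del: exp_le_cancel_iff)
  have "(2 / (p + 2))\<^sup>2 * (x / y)\<^sup>2 / (2 * exp p * V) = (2 / (p + 2))\<^sup>2 * x\<^sup>2 / (2 * exp p * v)"
    "(1 - 2 / (p + 2)) * (x / y) = (1 - 2 / (p + 2)) * x / y"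
    "(1 - 2 / (p + 2)) * x / y / W = (1 - 2 / (p + 2)) * x * y powr (p - 1) / w"
    using assms(3) unfolding V_def W_def by (simp_all add: power_divide powr_diff)
  note s = s[unfolded this(1), unfolded this(2), unfolded this(3)]
  then show ?thesis
    using s tail_bound_tail_exponent[OF assms(1,3) \<open>0 < s\<close>, of x v w] unfolding V_def W_def by linarith
qed

end

theorem theorem2p2:
  fixes M :: "'a measure" and F :: "nat \<Rightarrow> 'a measure" and \<xi> :: "nat \<Rightarrow> 'a \<Rightarrow> real"
    and n :: nat and p x y v w :: real
  assumes "prob_space M"
    and "n \<ge> 1"
    and "\<And>i. i \<le> n \<Longrightarrow> subalgebra M (F i)"
    and "sets (F 0) = {{}, space M}"
    and "\<And>i. i < n \<Longrightarrow> sets (F i) \<subseteq> sets (F (Suc i))"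
    and "\<And>\<omega>. \<xi> 0 \<omega> = 0"
    and "\<And>i. i \<le> n \<Longrightarrow> \<xi> i \<in> borel_measurable (F i)"
    and "\<And>i. i \<in> {1..n} \<Longrightarrow> integrable M (\<xi> i)"
    and "\<And>i. i \<in> {1..n} \<Longrightarrow> AE \<omega> in M. real_cond_exp M (F (i - 1)) (\<xi> i) \<omega> = 0"
    and "p \<ge> 2"
    and "\<And>i. i \<in> {1..n} \<Longrightarrow> integrable M (\<lambda>\<omega>. \<bar>\<xi> i \<omega>\<bar> powr p)"
    and "x > 0" and "y > 0" and "v > 0" and "w > 0"
  shows "measure M {\<omega> \<in> space M. \<exists>k\<in>{1..n}. mart_sum \<xi> k \<omega> \<ge> x
              \<and> cond_qv M F \<xi> k \<omega> \<le> v \<and> cond_pos_moment M F p \<xi> k \<omega> \<le> w}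
         \<le> exp (- ((2 / (p + 2))\<^sup>2 * x\<^sup>2 / (2 * exp p * v)))
           + exp (- ((1 - 2 / (p + 2)) * x / y) * ln (1 + (1 - 2 / (p + 2)) * x * y powr (p - 1) / w))
           + measure M {\<omega> \<in> space M. (MAX i\<in>{1..n}. \<xi> i \<omega>) > y}"
proof -
  interpret mart_diff_seq M F n \<xi> p
    using assms(1,3,5,7-11)
    by (simp add: mart_diff_seq_def mart_diff_seq_axioms_def finite_filtration_def finite_filtration_axioms_def)
  show ?thesis using assms(2,12-15) by (rule tail_bound_optimized)
qed

end
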